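(* There exist absolute constants $q_0$ and $C>0$ such that the following holds. Let $q\geq q_0$ be an integer, let $\delta\in\mathbb{N}$ with $\delta\leq\frac{\log q}{\log 2}$, and let $n\geq\delta q$ be an integer. Let $A:=\frac{1}{n!}\sum_{\pi\in S_n}\bigl(c_1(\pi^q)\bigr)^{\delta}$. Then: if $\delta=1$, $A=\sigma_0(q)$; if $\delta=2$, $A=\sigma_1(q)+\sigma_0(q)^2$; if $\delta=3$, $|A-\sigma_2(q)|\leq C\,\sigma_0(q)\sigma_1(q)$; if $\delta\geq4$, $|A-\sigma_{\delta-1}(q)|\leq C\,q^{\delta-2}\left(\delta\sigma_0(q)+2^{\delta}\right)$.
   Context: For $\pi\in S_n$, $c_1(\pi^q)$ is the number of fixed points (1-cycles) of the permutation $\pi^q$. For real $\alpha$, $\sigma_\alpha(q)=\sum_{d\mid q}d^\alpha$. $\mathbb{N}$ denotes the positive integers. *)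

theory Defs
  imports "HOL-Combinatorics.Permutations" Complex_Main
begin

definition c1 :: "nat \<Rightarrow> (nat \<Rightarrow> nat) \<Rightarrow> nat" where
  "c1 n p = card {i \<in> {..<n}. p i = i}"

definition sigma :: "real \<Rightarrow> nat \<Rightarrow> real" where
  "sigma \<alpha> q = (\<Sum>d\<in>{d. d dvd q}. real d powr \<alpha>)"

definition fixmoment :: "nat \<Rightarrow> nat \<Rightarrow> nat \<Rightarrow> real" where
  "fixmoment n q \<delta> =
     (\<Sum>\<pi>\<in>{p. p permutes {..<n}}. real (c1 n (\<pi> ^^ q)) ^ \<delta>) / fact n"

end

theory Submission
  imports Defs "HOL-Combinatorics.Cycles" "HOL-Combinatorics.Orbits"
    "HOL-Library.Discrete_Functions" "HOL-Analysis.Convex"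
begin

(* Write X(p) for the number of fixed points of p^q. A point x is fixed by p^q exactly when
   the length of its p-cycle divides q, and cutting that cycle out of p is a bijection between
   permutations of U and pairs (cycle through x, permutation of the remaining points). Summing
   X^(k+1) = (SUM x. [x fixed] X^k) over this bijection and expanding (d + X)^k binomially shows
   that, as long as k q <= |U|, the average of X^k does not depend on |U|: it is M(k), where
   M(0) = 1 and M(k+1) = SUM j<=k. (k choose j) sigma_(k-j)(q) M(j), the moments of
   SUM d|q. d Z_d for independent Poisson(1/d) variables Z_d.
   This gives the exact formulas for k = 1, 2. For larger k the term j = 0 of the recursion is
   sigma_(k-1)(q); the others are bounded by induction, using sigma_k(q) <= 2 q^k for k >= 2,
   sigma_1 <= q sigma_0, sigma_1^2 <= 2 sigma_0 q^2 (Cauchy-Schwarz) and sigma_0^2 <= 4 q. *)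

lemma cycle_of_list_funpow_nth:
  assumes "distinct cs" "i < length cs"
  shows "(cycle_of_list cs ^^ n) (cs ! i) = cs ! ((n + i) mod length cs)"
proof -
  have "map (cycle_of_list cs ^^ n) cs = rotate n cs" using cyclic_rotation[OF assms(1)] .
  hence "map (cycle_of_list cs ^^ n) cs ! i = rotate n cs ! i" by simp
  thus ?thesis using assms(2) by (simp add: nth_rotate)
qed

lemma cycle_of_list_funpow_fixed_iff:
  assumes "distinct cs" "i < length cs"
  shows "(cycle_of_list cs ^^ n) (cs ! i) = cs ! i \<longleftrightarrow> length cs dvd n"
proof -
  have lt: "(n + i) mod length cs < length cs" by (rule mod_less_divisor) (use assms(2) in linarith)
  have "(cycle_of_list cs ^^ n) (cs ! i) = cs ! i \<longleftrightarrow> (n + i) mod length cs = i"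
    unfolding cycle_of_list_funpow_nth[OF assms] using nth_eq_iff_index_eq[OF assms(1) lt assms(2)] .
  also have "\<dots> \<longleftrightarrow> (n + i) mod length cs = i mod length cs" using assms(2) by simp
  also have "\<dots> \<longleftrightarrow> length cs dvd n" by (simp add: mod_eq_dvd_iff_nat)
  finally show ?thesis .
qed

lemma funpow_cycle_comp_inside:
  assumes "s permutes V" "V \<inter> set cs = {}" "y \<in> set cs"
  shows "((cycle_of_list cs \<circ> s) ^^ n) y = (cycle_of_list cs ^^ n) y"
proof (induction n)
  case (Suc n)
  have "(cycle_of_list cs ^^ n) y \<in> set cs"
    using permutes_funpow[OF cycle_permutes[of cs], of n] assms(3) by (simp add: permutes_in_image)
  hence "s ((cycle_of_list cs ^^ n) y) = (cycle_of_list cs ^^ n) y"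
    using assms(1,2) by (meson disjoint_iff permutes_not_in)
  then show ?case using Suc by simp
qed simp

lemma funpow_cycle_comp_outside:
  assumes "s permutes V" "V \<inter> set cs = {}" "y \<in> V"
  shows "((cycle_of_list cs \<circ> s) ^^ n) y = (s ^^ n) y"
proof (induction n)
  case (Suc n)
  have "(s ^^ n) y \<in> V"
    using permutes_funpow[OF assms(1), of n] assms(3) by (simp add: permutes_in_image)
  hence "s ((s ^^ n) y) \<in> V" using assms(1) by (simp add: permutes_in_image)
  hence "cycle_of_list cs (s ((s ^^ n) y)) = s ((s ^^ n) y)"
    by (meson assms(2) disjoint_iff id_outside_supp)
  then show ?case using Suc by simp
qed simp

lemma support_cycle_comp:
  assumes "distinct (x # l)" "s permutes V" "V \<inter> set (x # l) = {}"
  shows "support (cycle_of_list (x # l) \<circ> s) x = x # l"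
proof -
  let ?p = "cycle_of_list (x # l) \<circ> s"
  have orbit: "(?p ^^ n) x = (x # l) ! (n mod length (x # l))" for n
    using funpow_cycle_comp_inside[OF assms(2,3), of x n]
      cycle_of_list_funpow_nth[OF assms(1), of 0 n] by simp
  have fixed_iff: "(?p ^^ n) x = x \<longleftrightarrow> length (x # l) dvd n" for n
    using funpow_cycle_comp_inside[OF assms(2,3), of x n]
      cycle_of_list_funpow_fixed_iff[OF assms(1), of 0 n] by simp
  have "least_power ?p x = length (x # l)"
    unfolding least_power_def
  proof (rule Least_equality)
    have "(?p ^^ length (x # l)) x = x" using fixed_iff[of "length (x # l)"] by (simp only: dvd_refl)
    thus "(?p ^^ length (x # l)) x = x \<and> 0 < length (x # l)" by simp
  next
    fix m assume "(?p ^^ m) x = x \<and> 0 < m"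
    thus "length (x # l) \<le> m" using fixed_iff[of m] by (auto intro: dvd_imp_le)
  qed
  hence "support ?p x = map (\<lambda>i. (x # l) ! i) [0..<length (x # l)]"
    using orbit by simp
  also have "\<dots> = x # l" by (rule map_nth)
  finally show ?thesis .
qed

definition cycle_tails :: "'a set \<Rightarrow> 'a \<Rightarrow> 'a list set" where
  "cycle_tails U x = {l. distinct l \<and> set l \<subseteq> U - {x}}"

lemma finite_cycle_tails: "finite U \<Longrightarrow> finite (cycle_tails U x)"
proof -
  assume U: "finite U"
  have "cycle_tails U x \<subseteq> {l. set l \<subseteq> U \<and> length l \<le> card U}"
    unfolding cycle_tails_def using U by (auto simp: distinct_card[symmetric] intro!: card_mono)
  thus ?thesis using finite_lists_length_le[OF U] by (rule finite_subset)
qed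

lemma cycle_comp_permutes:
  assumes "x \<in> U" "l \<in> cycle_tails U x" "s permutes (U - insert x (set l))"
  shows "cycle_of_list (x # l) \<circ> s permutes U"
proof (rule permutes_compose)
  show "s permutes U" using assms(3) by (auto intro: permutes_subset)
  show "cycle_of_list (x # l) permutes U"
    using cycle_permutes[of "x # l"] assms(1,2) unfolding cycle_tails_def
    by (auto intro: permutes_subset)
qed

lemma permutes_eq_cycle_comp_restrict:
  assumes "p permutes U" "finite U" "x \<in> U"
  shows "p = cycle_of_list (support p x) \<circ> perm_restrict p (U - set (support p x))"
proof (rule ext)
  fix y
  let ?cs = "support p x" and ?s = "perm_restrict p (U - set (support p x))"
  have perm: "permutation p" using assms(1,2) permutation_permutes by blast
  have cs_U: "set ?cs \<subseteq> U"
    using permutes_funpow[OF assms(1)] assms(3) by (auto simp: permutes_in_image)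
  show "p y = (cycle_of_list ?cs \<circ> ?s) y"
  proof (cases "y \<in> set ?cs")
    case True
    thus ?thesis using cycle_restrict[OF perm True] by (simp add: perm_restrict_def)
  next
    case False
    have "p y \<notin> set ?cs"
    proof
      assume "p y \<in> set ?cs"
      then obtain z where z: "z \<in> set ?cs" "p y = cycle_of_list ?cs z"
        using cycle_is_surj[OF cycle_of_permutation[OF perm]] by blast
      hence "p y = p z" using cycle_restrict[OF perm z(1)] by simp
      hence "y = z" using permutes_inj[OF assms(1)] by (simp add: inj_eq)
      thus False using False z(1) by simp
    qed
    moreover have "y \<notin> U \<Longrightarrow> p y = y" using assms(1) by (simp add: permutes_not_in)
    ultimately show ?thesis using False cs_U by (auto simp: perm_restrict_def id_outside_supp)
  qed
qed

lemma permutes_obtain_cycle_comp: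
  assumes "p permutes U" "finite U" "x \<in> U"
  obtains l s where "l \<in> cycle_tails U x" "s permutes (U - insert x (set l))"
    "p = cycle_of_list (x # l) \<circ> s"
proof
  have perm: "permutation p" using assms(1,2) permutation_permutes by blast
  define l where "l = tl (support p x)"
  have cs: "support p x = x # l"
    using least_power_of_permutation(2)[OF perm, of x] unfolding l_def by (simp add: upt_conv_Cons)
  have "distinct (x # l)" using cycle_of_permutation[OF perm, of x] cs by simp
  moreover have "set (support p x) \<subseteq> U"
    using permutes_funpow[OF assms(1)] assms(3) by (auto simp: permutes_in_image)
  ultimately show "l \<in> cycle_tails U x" unfolding cycle_tails_def cs by auto
  show "perm_restrict p (U - insert x (set l)) permutes (U - insert x (set l))"
    using semidecomposition[OF assms(1,2), of x] cs unfolding perm_restrict_def by simp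
  show "p = cycle_of_list (x # l) \<circ> perm_restrict p (U - insert x (set l))"
    using permutes_eq_cycle_comp_restrict[OF assms] cs by simp
qed

lemma cycle_comp_inject:
  assumes "distinct (x # l1)" "s1 permutes (U - insert x (set l1))"
    and "distinct (x # l2)" "s2 permutes (U - insert x (set l2))"
    and eq: "cycle_of_list (x # l1) \<circ> s1 = cycle_of_list (x # l2) \<circ> s2"
  shows "l1 = l2 \<and> s1 = s2"
proof
  have disj: "(U - insert x (set l)) \<inter> set (x # l) = {}" for l by auto
  have "x # l1 = x # l2"
    using support_cycle_comp[OF assms(1,2) disj] support_cycle_comp[OF assms(3,4) disj] eq by metis
  thus "l1 = l2" by simp
  have "inj (cycle_of_list (x # l1))"
    using permutation_bijective[OF permutation_of_cycle] bij_is_inj by blast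
  thus "s1 = s2" using eq \<open>l1 = l2\<close> by (auto simp: fun_eq_iff inj_eq)
qed

lemma bij_betw_cycle_comp:
  assumes "finite U" "x \<in> U"
  shows "bij_betw (\<lambda>(l, s). cycle_of_list (x # l) \<circ> s)
           (SIGMA l:cycle_tails U x. {s. s permutes (U - insert x (set l))}) {p. p permutes U}"
proof (rule bij_betwI')
  fix a b
  assume a: "a \<in> (SIGMA l:cycle_tails U x. {s. s permutes (U - insert x (set l))})"
    and b: "b \<in> (SIGMA l:cycle_tails U x. {s. s permutes (U - insert x (set l))})"
  obtain l1 s1 l2 s2 where ab: "a = (l1, s1)" "b = (l2, s2)" by (cases a, cases b)
  have "distinct (x # l1)" "distinct (x # l2)" using a b ab by (auto simp: cycle_tails_def)
  thus "((\<lambda>(l, s). cycle_of_list (x # l) \<circ> s) a = (\<lambda>(l, s). cycle_of_list (x # l) \<circ> s) b) = (a = b)"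
    using a b ab cycle_comp_inject[of x l1 s1 U l2 s2] by auto
next
  fix a assume "a \<in> (SIGMA l:cycle_tails U x. {s. s permutes (U - insert x (set l))})"
  thus "(\<lambda>(l, s). cycle_of_list (x # l) \<circ> s) a \<in> {p. p permutes U}"
    using cycle_comp_permutes[OF assms(2)] by auto
next
  fix p assume "p \<in> {p. p permutes U}"
  then obtain l s where "l \<in> cycle_tails U x" "s permutes (U - insert x (set l))"
      "p = cycle_of_list (x # l) \<circ> s"
    using permutes_obtain_cycle_comp[OF _ assms] by blast
  thus "\<exists>a\<in>(SIGMA l:cycle_tails U x. {s. s permutes (U - insert x (set l))}).
      p = (\<lambda>(l, s). cycle_of_list (x # l) \<circ> s) a" by force
qed

definition fix_count :: "nat \<Rightarrow> 'a set \<Rightarrow> ('a \<Rightarrow> 'a) \<Rightarrow> nat" where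
  "fix_count q U p = card {y \<in> U. (p ^^ q) y = y}"

lemma fix_count_cycle_comp:
  assumes "finite V" "distinct cs" "s permutes V" "V \<inter> set cs = {}"
  shows "fix_count q (set cs \<union> V) (cycle_of_list cs \<circ> s) =
           (if length cs dvd q then length cs else 0) + fix_count q V s"
proof -
  let ?p = "cycle_of_list cs \<circ> s"
  have on_cs: "{y \<in> set cs. (?p ^^ q) y = y} = (if length cs dvd q then set cs else {})"
  proof -
    have "(?p ^^ q) y = y \<longleftrightarrow> length cs dvd q" if "y \<in> set cs" for y
    proof -
      obtain i where "i < length cs" "y = cs ! i" using \<open>y \<in> set cs\<close> by (auto simp: in_set_conv_nth)
      thus ?thesis using funpow_cycle_comp_inside[OF assms(3,4) that]
          cycle_of_list_funpow_fixed_iff[OF assms(2)] by simp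
    qed
    thus ?thesis by auto
  qed
  have on_V: "{y \<in> V. (?p ^^ q) y = y} = {y \<in> V. (s ^^ q) y = y}"
    using funpow_cycle_comp_outside[OF assms(3,4)] by auto
  have "{y \<in> set cs \<union> V. (?p ^^ q) y = y} = {y \<in> set cs. (?p ^^ q) y = y} \<union> {y \<in> V. (?p ^^ q) y = y}"
    by auto
  hence "fix_count q (set cs \<union> V) ?p = card ({y \<in> set cs. (?p ^^ q) y = y} \<union> {y \<in> V. (s ^^ q) y = y})"
    unfolding fix_count_def on_V by simp
  also have "\<dots> = card {y \<in> set cs. (?p ^^ q) y = y} + card {y \<in> V. (s ^^ q) y = y}"
    by (rule card_Un_disjoint) (use assms(1,4) in auto)
  finally have "fix_count q (set cs \<union> V) ?p = card {y \<in> set cs. (?p ^^ q) y = y} + fix_count q V s"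
    unfolding fix_count_def .
  thus ?thesis unfolding on_cs using distinct_card[OF assms(2)] by simp
qed

lemma sum_permutes_fixing_point:
  fixes f :: "nat \<Rightarrow> real"
  assumes "finite U" "x \<in> U"
  shows "(\<Sum>p | p permutes U. if (p ^^ q) x = x then f (fix_count q U p) else 0) =
    (\<Sum>l\<in>cycle_tails U x. if Suc (length l) dvd q then
        (\<Sum>s | s permutes (U - insert x (set l)). f (Suc (length l) + fix_count q (U - insert x (set l)) s))
      else 0)"
proof -
  let ?F = "\<lambda>p. if (p ^^ q) x = x then f (fix_count q U p) else 0"
  have "(\<Sum>p | p permutes U. ?F p) =
      (\<Sum>a\<in>(SIGMA l:cycle_tails U x. {s. s permutes (U - insert x (set l))}).
        ?F ((\<lambda>(l, s). cycle_of_list (x # l) \<circ> s) a))"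
    by (rule sum.reindex_bij_betw[OF bij_betw_cycle_comp[OF assms], symmetric])
  also have "\<dots> = (\<Sum>l\<in>cycle_tails U x. \<Sum>s | s permutes (U - insert x (set l)). ?F (cycle_of_list (x # l) \<circ> s))"
    by (subst sum.Sigma)
      (auto simp: finite_cycle_tails assms(1) finite_permutations intro!: sum.cong split: prod.splits)
  also have "\<dots> = (\<Sum>l\<in>cycle_tails U x. if Suc (length l) dvd q then
        (\<Sum>s | s permutes (U - insert x (set l)). f (Suc (length l) + fix_count q (U - insert x (set l)) s))
      else 0)"
  proof (rule sum.cong[OF refl])
    fix l assume l: "l \<in> cycle_tails U x"
    let ?V = "U - insert x (set l)"
    have dist: "distinct (x # l)" and U: "U = set (x # l) \<union> ?V"
      using l assms(2) unfolding cycle_tails_def by auto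
    have disj: "?V \<inter> set (x # l) = {}" by auto
    have "?F (cycle_of_list (x # l) \<circ> s) =
        (if Suc (length l) dvd q then f (Suc (length l) + fix_count q ?V s) else 0)"
      if s: "s permutes ?V" for s
      using funpow_cycle_comp_inside[OF s disj, of x q]
        cycle_of_list_funpow_fixed_iff[OF dist, of 0 q]
        fix_count_cycle_comp[OF _ dist s disj, of q] assms(1) U by simp
    thus "(\<Sum>s | s permutes ?V. ?F (cycle_of_list (x # l) \<circ> s)) = (if Suc (length l) dvd q then
        (\<Sum>s | s permutes ?V. f (Suc (length l) + fix_count q ?V s)) else 0)"
      by simp
  qed
  finally show ?thesis .
qed

lemma card_distinct_lists_mult_fact:
  assumes "finite A" "m \<le> card A"
  shows "real (card {xs. length xs = m \<and> distinct xs \<and> set xs \<subseteq> A}) * fact (card A - m) = fact (card A)"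
proof -
  have "(fact (card A) :: nat) = fact (card A - m) * \<Prod>{Suc (card A - m)..card A}"
    by (rule fact_eq_fact_times) simp
  also have "\<Prod>{Suc (card A - m)..card A} = card {xs. length xs = m \<and> distinct xs \<and> set xs \<subseteq> A}"
    using card_lists_distinct_length_eq[OF assms] by simp
  finally have "real (fact (card A)) = real (fact (card A - m) * card {xs. length xs = m \<and> distinct xs \<and> set xs \<subseteq> A})"
    by (rule arg_cong)
  thus ?thesis unfolding of_nat_mult of_nat_fact by (simp add: mult.commute)

qed

lemma sum_divisors_eq_sum_lessThan:
  fixes F :: "nat \<Rightarrow> real"
  assumes "0 < q" "q \<le> n"
  shows "(\<Sum>m<n. if Suc m dvd q then F (Suc m) else 0) = (\<Sum>d | d dvd q. F d)"
proof -
  have "{d. d dvd q} = Suc ` {m \<in> {..<n}. Suc m dvd q}"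
  proof (intro set_eqI iffI)
    fix d assume "d \<in> {d. d dvd q}"
    hence "d dvd q" "0 < d" "d \<le> q" using assms(1) by (auto intro: dvd_imp_le dvd_pos_nat)
    thus "d \<in> Suc ` {m \<in> {..<n}. Suc m dvd q}"
      using assms(2) by (intro image_eqI[of _ _ "d - 1"]) auto
  qed auto
  hence "(\<Sum>d | d dvd q. F d) = (\<Sum>m | m \<in> {..<n} \<and> Suc m dvd q. F (Suc m))"
    by (simp add: sum.reindex)
  also have "\<dots> = (\<Sum>m<n. if Suc m dvd q then F (Suc m) else 0)"
    by (rule sum.inter_filter) simp
  finally show ?thesis by simp
qed

lemma sum_cycle_tails_divisor_lengths:
  fixes g :: "nat \<Rightarrow> real"
  assumes "finite U" "x \<in> U" "0 < q" "q \<le> card U"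
  shows "(\<Sum>l\<in>cycle_tails U x. if Suc (length l) dvd q then fact (card U - Suc (length l)) * g (Suc (length l)) else 0)
       = fact (card U - 1) * (\<Sum>d | d dvd q. g d)"
proof -
  let ?n = "card U"
  define H where "H m = (if Suc m dvd q then fact (?n - Suc m) * g (Suc m) else 0)" for m
  have "length l < ?n" if "l \<in> cycle_tails U x" for l
  proof -
    have "set (x # l) \<subseteq> U" "distinct (x # l)" using that assms(2) unfolding cycle_tails_def by auto
    hence "length (x # l) \<le> ?n" using assms(1) by (metis card_mono distinct_card)
    thus ?thesis by simp
  qed
  hence "(\<Sum>l\<in>cycle_tails U x. H (length l)) = (\<Sum>m<?n. \<Sum>l | l \<in> cycle_tails U x \<and> length l = m. H (length l))"
    by (intro sum.group[symmetric] finite_cycle_tails assms(1)) auto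
  also have "\<dots> = (\<Sum>m<?n. if Suc m dvd q then fact (?n - 1) * g (Suc m) else 0)"
  proof (rule sum.cong[OF refl])
    fix m assume m: "m \<in> {..<?n}"
    have tails: "{l. l \<in> cycle_tails U x \<and> length l = m} = {l. length l = m \<and> distinct l \<and> set l \<subseteq> U - {x}}"
      unfolding cycle_tails_def by auto
    have "real (card {l. length l = m \<and> distinct l \<and> set l \<subseteq> U - {x}}) * fact (?n - Suc m) = fact (?n - 1)"
      using card_distinct_lists_mult_fact[of "U - {x}" m] assms(1,2) m by simp
    thus "(\<Sum>l | l \<in> cycle_tails U x \<and> length l = m. H (length l)) =
        (if Suc m dvd q then fact (?n - 1) * g (Suc m) else 0)"
      unfolding tails H_def by simp
  qed
  also have "\<dots> = (\<Sum>d | d dvd q. fact (?n - 1) * g d)"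
    by (rule sum_divisors_eq_sum_lessThan[OF assms(3,4)])
  finally show ?thesis unfolding H_def by (simp add: sum_distrib_left)
qed

lemma sum_of_nat_add_power:
  fixes X :: "'a \<Rightarrow> nat"
  shows "(\<Sum>s\<in>S. real (d + X s) ^ k) = (\<Sum>j\<le>k. real (k choose j) * real d ^ (k - j) * (\<Sum>s\<in>S. real (X s) ^ j))"
proof -
  have "(\<Sum>s\<in>S. real (d + X s) ^ k) = (\<Sum>s\<in>S. \<Sum>j\<le>k. real (k choose j) * real (X s) ^ j * real d ^ (k - j))"
    by (intro sum.cong refl) (simp only: of_nat_add add.commute[of "real d"] binomial_ring)
  also have "\<dots> = (\<Sum>j\<le>k. \<Sum>s\<in>S. real (k choose j) * real (X s) ^ j * real d ^ (k - j))"
    by (rule sum.swap)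
  finally show ?thesis by (simp add: sum_distrib_left sum_distrib_right mult_ac)
qed

definition sigma_nat :: "nat \<Rightarrow> nat \<Rightarrow> real" where
  "sigma_nat k q = (\<Sum>d | d dvd q. real d ^ k)"

fun stable_moment :: "nat \<Rightarrow> nat \<Rightarrow> real" where
  "stable_moment q 0 = 1"
| "stable_moment q (Suc k) = (\<Sum>j\<le>k. real (k choose j) * sigma_nat (k - j) q * stable_moment q j)"

lemma fix_count_power_Suc:
  assumes "finite U"
  shows "real (fix_count q U p) ^ Suc k = (\<Sum>x\<in>U. if (p ^^ q) x = x then real (fix_count q U p) ^ k else 0)"
proof -
  define c where "c = real (fix_count q U p)"
  have "c = (\<Sum>x\<in>U. if (p ^^ q) x = x then 1 else 0)"
    unfolding c_def fix_count_def using sum.inter_filter[OF assms, of "\<lambda>_. 1::real"] by simp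
  hence "c ^ Suc k = c ^ k * (\<Sum>x\<in>U. if (p ^^ q) x = x then 1 else 0)" by (simp only: power_Suc2)
  also have "\<dots> = (\<Sum>x\<in>U. if (p ^^ q) x = x then c ^ k else 0)"
    unfolding sum_distrib_left by (intro sum.cong) auto
  finally show ?thesis unfolding c_def .
qed

lemma card_Diff_cycle_tail:
  assumes "finite U" "x \<in> U" "l \<in> cycle_tails U x"
  shows "card (U - insert x (set l)) = card U - Suc (length l)"
proof -
  have sub: "set (x # l) \<subseteq> U" and dist: "distinct (x # l)"
    using assms(2,3) unfolding cycle_tails_def by auto
  have "card (U - set (x # l)) = card U - card (set (x # l))"
    using card_Diff_subset[OF finite_subset[OF sub assms(1)] sub] .
  thus ?thesis using distinct_card[OF dist] by simp
qed

lemma mult_le_card_Diff_cycle_tail: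
  assumes "finite U" "x \<in> U" "l \<in> cycle_tails U x" "Suc (length l) \<le> q" "Suc k * q \<le> card U"
  shows "k * q \<le> card (U - insert x (set l))"
  using card_Diff_cycle_tail[OF assms(1-3)] assms(4,5) by simp

lemma sum_permutes_fixing_point_power:
  assumes "finite U" "x \<in> U" "0 < q" "q \<le> card U"
    and tail_sum: "\<And>l. l \<in> cycle_tails U x \<Longrightarrow> Suc (length l) dvd q \<Longrightarrow>
      (\<Sum>s | s permutes (U - insert x (set l)).
        real (Suc (length l) + fix_count q (U - insert x (set l)) s) ^ k)
      = fact (card U - Suc (length l)) * g (Suc (length l))"
  shows "(\<Sum>p | p permutes U. if (p ^^ q) x = x then real (fix_count q U p) ^ k else 0)
           = fact (card U - 1) * (\<Sum>d | d dvd q. g d)"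
proof -
  have "(\<Sum>p | p permutes U. if (p ^^ q) x = x then real (fix_count q U p) ^ k else 0)
      = (\<Sum>l\<in>cycle_tails U x. if Suc (length l) dvd q then
          (\<Sum>s | s permutes (U - insert x (set l)).
            real (Suc (length l) + fix_count q (U - insert x (set l)) s) ^ k) else 0)"
    by (rule sum_permutes_fixing_point[OF assms(1,2)])
  also have "\<dots> = (\<Sum>l\<in>cycle_tails U x. if Suc (length l) dvd q then
          fact (card U - Suc (length l)) * g (Suc (length l)) else 0)"
    using tail_sum by (intro sum.cong) auto
  also have "\<dots> = fact (card U - 1) * (\<Sum>d | d dvd q. g d)"
    by (rule sum_cycle_tails_divisor_lengths[OF assms(1-4)])
  finally show ?thesis .
qed

lemma sum_permutes_fix_count_power:
  assumes "0 < q" "finite U" "k * q \<le> card U"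
  shows "(\<Sum>p | p permutes U. real (fix_count q U p) ^ k) = fact (card U) * stable_moment q k"
  using assms(2,3)
proof (induction k arbitrary: U rule: less_induct)
  case (less k)
  show ?case
  proof (cases k)
    case 0
    thus ?thesis using card_permutations[OF refl less.prems(1)] by (simp add: of_nat_fact)
  next
    case (Suc k')
    let ?n = "card U"
    define G where "G d = (\<Sum>j\<le>k'. real (k' choose j) * real d ^ (k' - j) * stable_moment q j)" for d
    have "q \<le> ?n" using less.prems(2) Suc by simp
    have tail_sum: "(\<Sum>s | s permutes (U - insert x (set l)).
          real (Suc (length l) + fix_count q (U - insert x (set l)) s) ^ k')
        = fact (?n - Suc (length l)) * G (Suc (length l))"
      if "x \<in> U" "l \<in> cycle_tails U x" "Suc (length l) dvd q" for x l
    proof -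
      let ?V = "U - insert x (set l)"
      have card_V: "card ?V = ?n - Suc (length l)" by (rule card_Diff_cycle_tail[OF less.prems(1) that(1,2)])
      have "k' * q \<le> card ?V"
        using that assms(1) less.prems Suc by (intro mult_le_card_Diff_cycle_tail) (auto intro: dvd_imp_le)
      hence "(\<Sum>s | s permutes ?V. real (fix_count q ?V s) ^ j) = fact (card ?V) * stable_moment q j"
        if "j \<le> k'" for j
        using that Suc less.prems(1) order_trans[OF mult_le_mono1[OF that]] by (intro less.IH) auto
      thus ?thesis unfolding sum_of_nat_add_power G_def card_V
        by (simp add: sum_distrib_left mult_ac)
    qed
    have "(\<Sum>p | p permutes U. real (fix_count q U p) ^ Suc k')
        = (\<Sum>x\<in>U. \<Sum>p | p permutes U. if (p ^^ q) x = x then real (fix_count q U p) ^ k' else 0)"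
      using fix_count_power_Suc[OF less.prems(1)] by (simp add: sum.swap[of _ _ U])
    also have "\<dots> = (\<Sum>x\<in>U. fact (?n - 1) * (\<Sum>d | d dvd q. G d))"
      using sum_permutes_fixing_point_power[OF less.prems(1) _ assms(1) \<open>q \<le> ?n\<close> tail_sum]
      by (intro sum.cong) auto
    also have "\<dots> = fact ?n * (\<Sum>d | d dvd q. G d)"
      using less.prems(2) Suc assms(1) by (simp add: fact_reduce[of ?n])
    also have "(\<Sum>d | d dvd q. G d) = stable_moment q (Suc k')"
      unfolding G_def by (subst sum.swap) (simp add: sigma_nat_def sum_distrib_left sum_distrib_right mult_ac)
    finally show ?thesis using Suc by simp
  qed
qed

lemma fixmoment_eq_stable_moment:
  assumes "0 < q" "\<delta> * q \<le> n"
  shows "fixmoment n q \<delta> = stable_moment q \<delta>"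
  using sum_permutes_fix_count_power[OF assms(1), of "{..<n}" \<delta>] assms(2)
  unfolding fixmoment_def fix_count_def c1_def by simp

(* For q = 0 both sides are sums over the infinite set of all naturals, hence 0. *)
lemma sigma_of_nat_eq_sigma_nat: "sigma (real k) q = sigma_nat k q"
proof (cases "q = 0")
  case False
  thus ?thesis unfolding sigma_def sigma_nat_def
    by (intro sum.cong) (auto simp: powr_realpow dvd_pos_nat)
qed (simp add: sigma_def sigma_nat_def)

lemma sigma_nat_nonneg: "0 \<le> sigma_nat k q"
  unfolding sigma_nat_def by (rule sum_nonneg) simp

lemma sum_divisors_reflect:
  fixes f :: "nat \<Rightarrow> real"
  assumes "0 < q"
  shows "(\<Sum>d | d dvd q. f d) = (\<Sum>d | d dvd q. f (q div d))"
  by (rule sum.reindex_bij_witness[of _ "\<lambda>d. q div d" "\<lambda>d. q div d"])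
    (use assms in \<open>auto simp: div_div_eq_right dvd_div_iff_mult intro: dvd_div_eq_mult\<close>)

lemma sigma_nat_eq_sum_inverse:
  assumes "0 < q"
  shows "sigma_nat k q = real q ^ k * (\<Sum>d | d dvd q. (1 / real d) ^ k)"
proof -
  have "sigma_nat k q = (\<Sum>d | d dvd q. real (q div d) ^ k)"
    unfolding sigma_nat_def by (rule sum_divisors_reflect[OF assms])
  also have "\<dots> = (\<Sum>d | d dvd q. real q ^ k * (1 / real d) ^ k)"
    by (intro sum.cong refl) (simp add: real_of_nat_div power_divide)
  finally show ?thesis by (simp add: sum_distrib_left)
qed

lemma sum_inverse_squares_le: "1 \<le> n \<Longrightarrow> (\<Sum>d=1..n. (1 / real d) ^ 2) \<le> 2 - 1 / real n"
proof (induction n rule: dec_induct)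
  case (step n)
  have "(1 / real (Suc n)) ^ 2 \<le> 1 / (real n * real (Suc n))"
    using step(1) by (simp add: power2_eq_square frac_le)
  also have "\<dots> = 1 / real n - 1 / real (Suc n)"
    using step(1) by (simp add: field_simps)
  finally show ?case using step(3) by simp
qed simp

lemma sum_divisors_inverse_square_le:
  assumes "0 < q"
  shows "(\<Sum>d | d dvd q. (1 / real d) ^ 2) \<le> 2"
proof -
  have "{d. d dvd q} \<subseteq> {1..q}" using assms by (auto intro: dvd_imp_le dvd_pos_nat)
  hence "(\<Sum>d | d dvd q. (1 / real d) ^ 2) \<le> (\<Sum>d=1..q. (1 / real d) ^ 2)"
    by (intro sum_mono2) auto
  also have "\<dots> \<le> 2 - 1 / real q" using sum_inverse_squares_le[of q] assms by simp
  also have "\<dots> \<le> 2" by simp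
  finally show ?thesis .
qed

lemma sigma_nat_le:
  assumes "0 < q" "2 \<le> k"
  shows "sigma_nat k q \<le> 2 * real q ^ k"
proof -
  have "(\<Sum>d | d dvd q. (1 / real d) ^ k) \<le> (\<Sum>d | d dvd q. (1 / real d) ^ 2)"
    using assms by (intro sum_mono power_decreasing) (auto simp: dvd_pos_nat)
  also have "\<dots> \<le> 2" by (rule sum_divisors_inverse_square_le[OF assms(1)])
  finally have "real q ^ k * (\<Sum>d | d dvd q. (1 / real d) ^ k) \<le> real q ^ k * 2"
    by (intro mult_left_mono) auto
  thus ?thesis unfolding sigma_nat_eq_sum_inverse[OF assms(1)] by (simp add: mult.commute)
qed

lemma sigma_nat_1_le:
  assumes "0 < q"
  shows "sigma_nat 1 q \<le> real q * sigma_nat 0 q"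
proof -
  have "(\<Sum>d | d dvd q. 1 / real d) \<le> (\<Sum>d | d dvd q. 1)"
    using assms by (intro sum_mono) (auto simp: dvd_pos_nat)
  thus ?thesis unfolding sigma_nat_eq_sum_inverse[OF assms]
    by (simp add: sigma_nat_def mult_left_mono)
qed

lemma real_le_sigma_nat_1:
  assumes "0 < q"
  shows "real q \<le> sigma_nat 1 q"
  using member_le_sum[of q "{d. d dvd q}" "\<lambda>d. real d ^ 1"] assms
  unfolding sigma_nat_def by (simp add: finite_divisors_nat)

lemma sigma_nat_1_square_le:
  assumes "0 < q"
  shows "sigma_nat 1 q ^ 2 \<le> 2 * sigma_nat 0 q * real q ^ 2"
proof -
  have "(\<Sum>d | d dvd q. 1 * (1 / real d)) ^ 2 \<le> (\<Sum>d | d dvd q. 1 ^ 2) * (\<Sum>d | d dvd q. (1 / real d) ^ 2)"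
    by (rule Cauchy_Schwarz_ineq_sum)
  also have "\<dots> = sigma_nat 0 q * (\<Sum>d | d dvd q. (1 / real d) ^ 2)"
    by (simp add: sigma_nat_def)
  also have "\<dots> \<le> sigma_nat 0 q * 2"
    using sum_divisors_inverse_square_le[OF assms] sigma_nat_nonneg by (rule mult_left_mono)
  finally have "real q ^ 2 * (\<Sum>d | d dvd q. 1 / real d) ^ 2 \<le> real q ^ 2 * (sigma_nat 0 q * 2)"
    by (intro mult_left_mono) simp_all
  thus ?thesis
    unfolding sigma_nat_eq_sum_inverse[OF assms, of 1] by (simp add: power_mult_distrib mult_ac)
qed

lemma card_divisors_le_floor_sqrt:
  assumes "0 < q"
  shows "card {d. d dvd q} \<le> 2 * floor_sqrt q"
proof -
  let ?r = "floor_sqrt q"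
  have "{d. d dvd q} \<subseteq> {1..?r} \<union> (\<lambda>e. q div e) ` {1..?r}"
  proof
    fix d assume "d \<in> {d. d dvd q}"
    then obtain e where q: "q = d * e" by auto
    with assms have pos: "0 < d" "0 < e" by auto
    show "d \<in> {1..?r} \<union> (\<lambda>e. q div e) ` {1..?r}"
    proof (cases "d \<le> ?r")
      case False
      hence "e * e < d * e" using q pos by (simp add: le_floor_sqrt_iff power2_eq_square)
      hence "e \<le> ?r" using q by (simp add: le_floor_sqrt_iff power2_eq_square)
      moreover have "d = q div e" using q pos by simp
      ultimately show ?thesis using pos by auto
    qed (use pos in auto)
  qed
  hence "card {d. d dvd q} \<le> card ({1..?r} \<union> (\<lambda>e. q div e) ` {1..?r})"
    by (intro card_mono) auto
  also have "\<dots> \<le> ?r + ?r"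
    using card_Un_le[of "{1..?r}" "(\<lambda>e. q div e) ` {1..?r}"] card_image_le[of "{1..?r}" "\<lambda>e. q div e"]
    by simp
  finally show ?thesis by simp
qed

lemma sigma_nat_0_square_le:
  assumes "0 < q"
  shows "sigma_nat 0 q ^ 2 \<le> 4 * real q"
proof -
  have "card {d. d dvd q} ^ 2 \<le> (2 * floor_sqrt q) ^ 2"
    using card_divisors_le_floor_sqrt[OF assms] by (rule power_mono) simp
  also have "\<dots> \<le> 4 * q" using floor_sqrt_power2_le[of q] by (simp add: power_mult_distrib)
  finally show ?thesis unfolding sigma_nat_def by (simp flip: of_nat_power)
qed

lemma sigma_nat_0_le:
  assumes "4 \<le> q"
  shows "sigma_nat 0 q \<le> real q"
proof (rule power2_le_imp_le)
  show "sigma_nat 0 q ^ 2 \<le> real q ^ 2"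
    using sigma_nat_0_square_le[of q] assms by (simp add: power2_eq_square order_trans)
qed simp

lemma stable_moment_nonneg: "0 \<le> stable_moment q k"
  by (induction q k rule: stable_moment.induct) (auto intro!: sum_nonneg simp: sigma_nat_nonneg)

definition moment_term :: "nat \<Rightarrow> nat \<Rightarrow> nat \<Rightarrow> real" where
  "moment_term q k j = real (k choose j) * sigma_nat (k - j) q * stable_moment q j"

lemma moment_term_nonneg: "0 \<le> moment_term q k j"
  unfolding moment_term_def by (simp add: sigma_nat_nonneg stable_moment_nonneg)

lemma stable_moment_Suc_sub: "stable_moment q (Suc k) - sigma_nat k q = (\<Sum>j=1..k. moment_term q k j)"
proof -
  have "stable_moment q (Suc k) = (\<Sum>j=0..k. moment_term q k j)"
    by (simp add: moment_term_def atLeast0AtMost)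
  also have "\<dots> = sigma_nat k q + (\<Sum>j=1..k. moment_term q k j)"
    by (simp add: sum.atLeast_Suc_atMost moment_term_def)
  finally show ?thesis by simp
qed

lemma sigma_nat_le_stable_moment_Suc: "sigma_nat k q \<le> stable_moment q (Suc k)"
  using stable_moment_Suc_sub[of q k] sum_nonneg[of "{1..k}" "moment_term q k"] moment_term_nonneg
  by simp

lemma stable_moment_2: "stable_moment q 2 = sigma_nat 1 q + sigma_nat 0 q ^ 2"
  by (simp add: numeral_2_eq_2 power2_eq_square)

lemma stable_moment_3:
  "stable_moment q 3 = sigma_nat 2 q + 3 * sigma_nat 1 q * sigma_nat 0 q + sigma_nat 0 q ^ 3"
proof -
  have "stable_moment q 3 = sigma_nat 2 q + 2 * sigma_nat 1 q * stable_moment q 1 + sigma_nat 0 q * stable_moment q 2"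
    by (simp add: numeral_3_eq_3 numeral_2_eq_2)
  thus ?thesis unfolding stable_moment_2 by (simp add: algebra_simps power2_eq_square power3_eq_cube)
qed

lemma stable_moment_3_le:
  assumes "4 \<le> q"
  shows "stable_moment q 3 \<le> 18 * real q ^ 2"
proof -
  let ?t = "sigma_nat 0 q" and ?Q = "real q"
  have q: "0 < q" using assms by simp
  have t_sq: "?t ^ 2 \<le> 4 * ?Q" by (rule sigma_nat_0_square_le[OF q])
  have "sigma_nat 1 q * ?t \<le> ?Q * ?t * ?t"
    using sigma_nat_1_le[OF q] sigma_nat_nonneg by (rule mult_right_mono)
  also have "\<dots> = ?Q * ?t ^ 2" by (simp add: power2_eq_square)
  also have "\<dots> \<le> ?Q * (4 * ?Q)" using t_sq by (rule mult_left_mono) simp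
  also have "\<dots> = 4 * ?Q ^ 2" by (simp add: power2_eq_square)
  finally have s1: "sigma_nat 1 q * ?t \<le> 4 * ?Q ^ 2" .
  have "?t ^ 3 \<le> ?Q * (4 * ?Q)"
    using mult_mono[OF sigma_nat_0_le[OF assms] t_sq] by (simp add: power3_eq_cube power2_eq_square)
  thus ?thesis
    using stable_moment_3[of q] sigma_nat_le[OF q, of 2] s1 by (simp add: power2_eq_square)
qed

lemma square_le_two_pow: "4 \<le> m \<Longrightarrow> m ^ 2 \<le> (2::nat) ^ m"
proof (induction m rule: dec_induct)
  case (step m)
  have "4 * m \<le> m * m" using mult_le_mono1[OF step(1)] .
  moreover have "Suc m ^ 2 = m * m + 2 * m + 1" by (simp add: power2_eq_square)
  ultimately have "Suc m ^ 2 \<le> 2 * m ^ 2" using step(1) unfolding power2_eq_square by linarith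
  thus ?case using step(3) by simp
qed simp

lemma cube_le_four_mult_two_pow: "4 \<le> m \<Longrightarrow> m ^ 3 \<le> 4 * (2::nat) ^ m"
proof (induction m rule: dec_induct)
  case (step m)
  have "4 * m \<le> m * m" "4 * (m * m) \<le> m * m * m"
    using mult_le_mono1[OF step(1)] by simp_all
  moreover have "Suc m ^ 3 = m * m * m + 3 * (m * m) + 3 * m + 1"
    by (simp add: power3_eq_cube algebra_simps)
  ultimately have "Suc m ^ 3 \<le> 2 * m ^ 3" using step(1) unfolding power3_eq_cube by linarith
  thus ?case using step(3) by simp
qed simp

lemma square_mult_256_le_two_pow: "16 \<le> m \<Longrightarrow> 256 * m ^ 2 \<le> (2::nat) ^ m"
proof (induction m rule: dec_induct)
  case (step m)
  have "16 * m \<le> m * m" using mult_le_mono1[OF step(1)] .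
  moreover have "Suc m ^ 2 = m * m + 2 * m + 1" by (simp add: power2_eq_square)
  ultimately have "Suc m ^ 2 \<le> 2 * m ^ 2" using step(1) unfolding power2_eq_square by linarith
  thus ?case using step(3) by simp
qed simp

lemma square_mult_sigma_nat_1_le:
  assumes q: "0 < q" and k: "4 \<le> k"
  shows "real k ^ 2 * sigma_nat 1 q \<le> real q * (real k * sigma_nat 0 q + 8 * 2 ^ k)"
proof -
  let ?t = "sigma_nat 0 q" and ?s = "sigma_nat 1 q" and ?Q = "real q"
  have t0: "0 \<le> ?t" and Q0: "0 < ?Q" using q by (simp_all add: sigma_nat_nonneg)

  show ?thesis
  proof (cases "real k * ?s \<le> ?Q * ?t")
    case True
    hence "real k ^ 2 * ?s \<le> real k * (?Q * ?t)"
      by (simp add: power2_eq_square mult.assoc mult_left_mono)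
    moreover have "?Q * (real k * ?t + 8 * 2 ^ k) = real k * (?Q * ?t) + ?Q * (8 * 2 ^ k)"
      by (simp add: algebra_simps)
    moreover have "0 \<le> ?Q * (8 * 2 ^ k)" using Q0 by simp
    ultimately show ?thesis by linarith
  next
    case False
    have "0 < ?s" using real_le_sigma_nat_1[OF q] Q0 by linarith
    have "?s * ?s \<le> 2 * ?Q * (?Q * ?t)"
      using sigma_nat_1_square_le[OF q] by (simp add: power2_eq_square algebra_simps)
    also have "\<dots> \<le> 2 * ?Q * (real k * ?s)" using False Q0 by (intro mult_left_mono) simp_all
    finally have "?s * ?s \<le> (2 * ?Q * real k) * ?s" by (simp add: algebra_simps)
    hence "?s \<le> 2 * ?Q * real k" using \<open>0 < ?s\<close> by (rule mult_right_le_imp_le)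
    hence "real k ^ 2 * ?s \<le> real k ^ 2 * (2 * ?Q * real k)" by (rule mult_left_mono) simp
    also have "\<dots> = 2 * ?Q * real k ^ 3" by (simp add: power2_eq_square power3_eq_cube)
    also have "\<dots> \<le> 2 * ?Q * (4 * 2 ^ k)"
    proof (rule mult_left_mono)
      have "real (k ^ 3) \<le> real (4 * 2 ^ k)" using cube_le_four_mult_two_pow[OF k] by (simp only: of_nat_le_iff)
      thus "real k ^ 3 \<le> 4 * 2 ^ k" by simp
    qed (use Q0 in simp)
    also have "\<dots> \<le> ?Q * (real k * ?t + 8 * 2 ^ k)" using Q0 t0 by (simp add: algebra_simps)
    finally show ?thesis .
  qed
qed

lemma mult_sigma_nat_0_le:
  assumes "0 < q" "256 * j ^ 2 \<le> q"
  shows "8 * real j * sigma_nat 0 q \<le> real q"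
proof (rule power2_le_imp_le)
  have "(8 * real j * sigma_nat 0 q) ^ 2 = 64 * real j ^ 2 * sigma_nat 0 q ^ 2"
    by (simp add: power_mult_distrib)
  also have "\<dots> \<le> 64 * real j ^ 2 * (4 * real q)"
    using sigma_nat_0_square_le[OF assms(1)] by (rule mult_left_mono) simp
  also have "\<dots> = (256 * real j ^ 2) * real q" by simp
  also have "\<dots> \<le> real q * real q"
  proof (rule mult_right_mono)
    have "real (256 * j ^ 2) \<le> real q" using assms(2) by (simp only: of_nat_le_iff)
    thus "256 * real j ^ 2 \<le> real q" by simp
  qed simp
  finally show "(8 * real j * sigma_nat 0 q) ^ 2 \<le> real q ^ 2" by (simp add: power2_eq_square)
qed simp

lemma moment_term_1_le:
  assumes "0 < q" "3 \<le> k"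
  shows "moment_term q k 1 \<le> 2 * real k * sigma_nat 0 q * real q ^ (k - 1)"
proof -
  have "moment_term q k 1 = real k * sigma_nat (k - 1) q * sigma_nat 0 q"
    by (simp add: moment_term_def)
  also have "\<dots> \<le> real k * (2 * real q ^ (k - 1)) * sigma_nat 0 q"
    using sigma_nat_le[OF assms(1), of "k - 1"] assms(2)
    by (intro mult_right_mono mult_left_mono) (simp_all add: sigma_nat_nonneg)
  finally show ?thesis by (simp add: mult_ac)
qed

lemma moment_term_2_le:
  assumes q: "0 < q" and k: "4 \<le> k"
  shows "moment_term q k 2 \<le> (2 * real k * sigma_nat 0 q + 24 * 2 ^ k) * real q ^ (k - 1)"
proof -
  let ?t = "sigma_nat 0 q" and ?s = "sigma_nat 1 q" and ?Q = "real q"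
  have choose: "real (k choose 2) \<le> real k ^ 2"
    using binomial_le_pow[of 2 k] k by (simp flip: of_nat_power)
  have pow: "real k ^ 2 \<le> 2 ^ k"
    using square_le_two_pow[OF k] by (simp flip: of_nat_power of_nat_le_iff)
  have "moment_term q k 2 \<le> real k ^ 2 * (2 * ?Q ^ (k - 2)) * (?s + 4 * ?Q)"
    unfolding moment_term_def stable_moment_2
    using choose sigma_nat_le[OF q, of "k - 2"] sigma_nat_0_square_le[OF q] k
    by (intro mult_mono add_left_mono) (simp_all add: sigma_nat_nonneg add_nonneg_nonneg)
  also have "\<dots> = 2 * ?Q ^ (k - 2) * (real k ^ 2 * ?s + 4 * real k ^ 2 * ?Q)"
    by (simp add: algebra_simps)
  also have "\<dots> \<le> 2 * ?Q ^ (k - 2) * (?Q * (real k * ?t + 8 * 2 ^ k) + 4 * 2 ^ k * ?Q)"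
    using square_mult_sigma_nat_1_le[OF q k] pow q by (intro mult_left_mono add_mono) simp_all
  also have "\<dots> = (2 * real k * ?t + 24 * 2 ^ k) * (?Q ^ (k - 2) * ?Q)"
    by (simp add: algebra_simps)
  also have "?Q ^ (k - 2) * ?Q = ?Q ^ (k - 1)"
    using k by (simp flip: power_Suc2 add: Suc_diff_Suc numeral_2_eq_2)
  finally show ?thesis .
qed

lemma moment_term_le_of_stable_moment_le:
  assumes "0 < q" "1 \<le> j" "j + 2 \<le> k" "stable_moment q j \<le> 65 * real q ^ (j - 1)"
  shows "moment_term q k j \<le> 130 * real (k choose j) * real q ^ (k - 1)"
proof -
  have "moment_term q k j \<le> real (k choose j) * (2 * real q ^ (k - j)) * (65 * real q ^ (j - 1))"
    unfolding moment_term_def using sigma_nat_le[OF assms(1), of "k - j"] assms(3,4)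
    by (intro mult_mono) (simp_all add: sigma_nat_nonneg stable_moment_nonneg)
  also have "\<dots> = 130 * real (k choose j) * real q ^ ((k - j) + (j - 1))"
    by (simp add: power_add)
  also have "(k - j) + (j - 1) = k - 1" using assms(2,3) by simp
  finally show ?thesis .
qed

lemma moment_term_penultimate_le:
  assumes "0 < q" "2 \<le> k" "stable_moment q (k - 1) \<le> 65 * real q ^ (k - 2)"
  shows "moment_term q k (k - 1) \<le> 65 * real k * sigma_nat 0 q * real q ^ (k - 1)"
proof -
  have "k - (k - 1) = 1" using assms(2) by simp
  moreover have "k choose (k - 1) = k choose (k - (k - 1))" by (rule binomial_symmetric) simp
  ultimately have "moment_term q k (k - 1) = real k * sigma_nat 1 q * stable_moment q (k - 1)"
    by (simp add: moment_term_def)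
  also have "\<dots> \<le> real k * (real q * sigma_nat 0 q) * (65 * real q ^ (k - 2))"
    using sigma_nat_1_le[OF assms(1)] assms(3)
    by (intro mult_mono mult_left_mono) (simp_all add: sigma_nat_nonneg stable_moment_nonneg)
  also have "\<dots> = 65 * real k * sigma_nat 0 q * (real q ^ (k - 2) * real q)"
    by (simp add: algebra_simps)
  also have "real q ^ (k - 2) * real q = real q ^ (k - 1)"
    using assms(2) by (simp flip: power_Suc2 add: Suc_diff_Suc numeral_2_eq_2)
  finally show ?thesis .
qed

lemma moment_term_last_le:
  assumes "stable_moment q k \<le> 65 * real q ^ (k - 1)"
  shows "moment_term q k k \<le> 65 * sigma_nat 0 q * real q ^ (k - 1)"
  using mult_left_mono[OF assms sigma_nat_nonneg[of 0 q]] by (simp add: moment_term_def mult_ac)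

lemma sum_atLeastAtMost_split_last_two:
  fixes f :: "nat \<Rightarrow> 'a::comm_monoid_add" and m n :: nat
  assumes "m < n" "2 \<le> n"

  shows "(\<Sum>j=m..n. f j) = (\<Sum>j=m..n-2. f j) + f (n - 1) + f n"

proof -
  have e: "n - 2 + 2 = n" "n - 2 + 1 = n - 1" using assms by simp_all
  have "(\<Sum>j=m..n. f j) = (\<Sum>j=m..n-2. f j) + (\<Sum>j=n-1..n. f j)"
    using sum.ub_add_nat[of m "n - 2" f 2] assms unfolding e by simp
  moreover have "{n - 1..n} = {n - 1, n}" using assms by auto
  ultimately show ?thesis using assms by (simp add: add.assoc)
qed

lemma stable_moment_excess_le_of_moment_le:

  assumes q: "0 < q" and k: "4 \<le> k"
    and moment_le: "\<And>j. 3 \<le> j \<Longrightarrow> j \<le> k \<Longrightarrow> stable_moment q j \<le> 65 * real q ^ (j - 1)"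
  shows "stable_moment q (Suc k) - sigma_nat k q
           \<le> 100 * real q ^ (k - 1) * (real (Suc k) * sigma_nat 0 q + 2 ^ Suc k)"
proof -
  let ?T = "moment_term q k" and ?t = "sigma_nat 0 q" and ?P = "real q ^ (k - 1)"
  have split_first: "(\<Sum>j=1..k. ?T j) = ?T 1 + ?T 2 + (\<Sum>j=3..k. ?T j)"
    using sum.atLeast_Suc_atMost[of 1 k ?T] sum.atLeast_Suc_atMost[of 2 k ?T] k
    by (simp add: numeral_2_eq_2 numeral_3_eq_3)
  have split_last: "(\<Sum>j=3..k. ?T j) = (\<Sum>j=3..k-2. ?T j) + ?T (k - 1) + ?T k"
    using k by (intro sum_atLeastAtMost_split_last_two) simp_all
  have middle: "(\<Sum>j=3..k-2. ?T j) \<le> 130 * 2 ^ k * ?P"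
  proof -
    have "(\<Sum>j=3..k-2. ?T j) \<le> (\<Sum>j=3..k-2. 130 * real (k choose j) * ?P)"
      using moment_le q by (intro sum_mono moment_term_le_of_stable_moment_le) auto
    also have "\<dots> \<le> (\<Sum>j\<le>k. 130 * real (k choose j) * ?P)"
      by (intro sum_mono2) auto
    also have "\<dots> = 130 * 2 ^ k * ?P"
      by (simp flip: sum_distrib_left sum_distrib_right of_nat_sum add: choose_row_sum)
    finally show ?thesis .
  qed
  have penultimate: "?T (k - 1) \<le> 65 * real k * ?t * ?P"
    using moment_le[of "k - 1"] k by (intro moment_term_penultimate_le q) (simp_all add: numeral_2_eq_2)
  have last: "?T k \<le> 65 * ?t * ?P" using moment_le[of k] k by (intro moment_term_last_le) simp
  have "stable_moment q (Suc k) - sigma_nat k q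
      \<le> 2 * real k * ?t * ?P + (2 * real k * ?t + 24 * 2 ^ k) * ?P + 130 * 2 ^ k * ?P
         + 65 * real k * ?t * ?P + 65 * ?t * ?P"
    unfolding stable_moment_Suc_sub split_first split_last
    using moment_term_1_le[OF q, of k] moment_term_2_le[OF q k] middle penultimate last k by linarith
  also have "\<dots> = (69 * real k * ?t + 65 * ?t + 154 * 2 ^ k) * ?P"
    by (simp add: algebra_simps)
  also have "\<dots> \<le> (100 * (real (Suc k) * ?t + 2 ^ Suc k)) * ?P"
    using sigma_nat_nonneg[of 0 q] by (intro mult_right_mono) (simp_all add: algebra_simps)
  finally show ?thesis by (simp add: mult_ac)
qed

lemma stable_moment_4_excess_le:
  assumes "4 \<le> q"
  shows "stable_moment q 4 - sigma_nat 3 q \<le> 42 * real q ^ 2 * sigma_nat 0 q"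
proof -
  let ?T = "moment_term q 3" and ?t = "sigma_nat 0 q" and ?s = "sigma_nat 1 q" and ?Q = "real q"
  have q: "0 < q" using assms by simp
  have "{1..3::nat} = {1, 2, 3}" by auto
  hence "stable_moment q 4 - sigma_nat 3 q = ?T 1 + ?T 2 + ?T 3"
    using stable_moment_Suc_sub[of q 3] by (simp add: numeral_eq_Suc)
  moreover have "?T 1 \<le> 6 * ?Q ^ 2 * ?t" using moment_term_1_le[OF q, of 3] by (simp add: mult_ac)
  moreover have "?T 2 \<le> 18 * ?Q ^ 2 * ?t"
  proof -
    have "?T 2 = 3 * (?s ^ 2 + ?s * ?t ^ 2)"
      by (simp add: moment_term_def stable_moment_2 numeral_eq_Suc power2_eq_square algebra_simps)
    moreover have "?s * ?t ^ 2 \<le> (?Q * ?t) * (4 * ?Q)"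
      using sigma_nat_1_le[OF q] sigma_nat_0_square_le[OF q] by (intro mult_mono) (simp_all add: sigma_nat_nonneg)
    ultimately show ?thesis using sigma_nat_1_square_le[OF q] by (simp add: power2_eq_square algebra_simps)
  qed
  moreover have "?T 3 \<le> 18 * ?Q ^ 2 * ?t"
    using mult_left_mono[OF stable_moment_3_le[OF assms] sigma_nat_nonneg[of 0 q]]
    by (simp add: moment_term_def mult_ac)
  ultimately show ?thesis by linarith
qed

lemma stable_moment_le_of_excess_le:
  assumes q: "0 < q" and j: "4 \<le> j" "2 ^ Suc j \<le> q" "256 * j ^ 2 \<le> q"
    and excess: "stable_moment q j - sigma_nat (j - 1) q
                   \<le> 100 * real q ^ (j - 2) * (real j * sigma_nat 0 q + 2 ^ j)"
  shows "stable_moment q j \<le> 65 * real q ^ (j - 1)"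
proof -
  let ?Q = "real q"
  have "real (2 ^ Suc j) \<le> ?Q" using j(2) by (simp only: of_nat_le_iff)
  hence "real j * sigma_nat 0 q + 2 ^ j \<le> ?Q * (5 / 8)"
    using mult_sigma_nat_0_le[OF q j(3)] by simp
  hence "100 * ?Q ^ (j - 2) * (real j * sigma_nat 0 q + 2 ^ j) \<le> 100 * ?Q ^ (j - 2) * (?Q * (5 / 8))"
    by (intro mult_left_mono) simp_all
  also have "\<dots> = 62.5 * ?Q ^ (j - 1)"
    using j(1) by (simp add: power_Suc2[symmetric] Suc_diff_Suc numeral_2_eq_2)
  finally have "100 * ?Q ^ (j - 2) * (real j * sigma_nat 0 q + 2 ^ j) \<le> 62.5 * ?Q ^ (j - 1)" .
  moreover have "sigma_nat (j - 1) q \<le> 2 * ?Q ^ (j - 1)" using sigma_nat_le[OF q, of "j - 1"] j(1) by simp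
  moreover have "0 \<le> ?Q ^ (j - 1)" by simp
  ultimately show ?thesis using excess by linarith
qed

lemma stable_moment_excess_le:
  assumes "0 < q" "4 \<le> m" "2 ^ m \<le> q" "256 * m ^ 2 \<le> q"
  shows "stable_moment q m - sigma_nat (m - 1) q
           \<le> 100 * real q ^ (m - 2) * (real m * sigma_nat 0 q + 2 ^ m)"
  using assms(2-4)
proof (induction m rule: less_induct)
  case (less m)
  have "(2::nat) ^ 4 \<le> 2 ^ m" using less.prems(1) by (intro power_increasing) simp_all
  hence q: "4 \<le> q" using less.prems(2) by simp
  show ?case
  proof (cases "m = 4")
    case True
    have "42 * real q ^ 2 * sigma_nat 0 q \<le> 100 * real q ^ 2 * (4 * sigma_nat 0 q + 16)"
      using sigma_nat_nonneg[of 0 q] by (simp add: algebra_simps)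
    moreover have e: "(4::nat) - 1 = 3" "(4::nat) - 2 = 2" "real (4::nat) = 4" "(2::real) ^ 4 = 16" by simp_all
    ultimately show ?thesis using stable_moment_4_excess_le[OF q] unfolding True e by linarith
  next
    case False
    then obtain k where m: "m = Suc k" and k: "4 \<le> k" using less.prems(1) by (cases m) auto
    have "stable_moment q j \<le> 65 * real q ^ (j - 1)" if "3 \<le> j" "j \<le> k" for j
    proof (cases "j = 3")
      case True
      have "stable_moment q 3 \<le> 65 * real q ^ 2"
        using stable_moment_3_le[OF q] zero_le_power2[of "real q"] by linarith
      thus ?thesis using True by simp
    next
      case False
      have j: "j < m" "4 \<le> j" using that False m by simp_all
      have "(2::nat) ^ Suc j \<le> 2 ^ m" using j by (intro power_increasing) simp_all
      moreover have "(2::nat) ^ j \<le> 2 ^ Suc j" by simp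
      ultimately have pow: "2 ^ j \<le> q" "2 ^ Suc j \<le> q" using less.prems(2) by linarith+
      have "j ^ 2 \<le> m ^ 2" using j by (intro power_mono) simp_all
      hence sq: "256 * j ^ 2 \<le> q" using less.prems(3) by linarith
      show ?thesis
        by (rule stable_moment_le_of_excess_le[OF assms(1) j(2) pow(2) sq less.IH[OF j pow(1) sq]])
    qed
    thus ?thesis using stable_moment_excess_le_of_moment_le[OF assms(1) k] m by simp
  qed
qed

lemma stable_moment_excess_abs_le:
  assumes "65536 \<le> q" "4 \<le> m" "2 ^ m \<le> q"
  shows "\<bar>stable_moment q m - sigma_nat (m - 1) q\<bar>
           \<le> 100 * real q ^ (m - 2) * (real m * sigma_nat 0 q + 2 ^ m)"
proof -
  have "256 * m ^ 2 \<le> q"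
  proof (cases "m \<le> 16")
    case True
    hence "256 * m ^ 2 \<le> 256 * 16 ^ 2" by (intro mult_left_mono power_mono) simp_all
    thus ?thesis using assms(1) by simp
  next
    case False
    thus ?thesis using square_mult_256_le_two_pow[of m] assms(3) by simp
  qed
  moreover have "sigma_nat (m - 1) q \<le> stable_moment q m"
    using sigma_nat_le_stable_moment_Suc[of "m - 1" q] assms(2) by simp
  ultimately show ?thesis using stable_moment_excess_le[of q m] assms by simp
qed

lemma stable_moment_3_excess_abs_le:
  assumes "0 < q"
  shows "\<bar>stable_moment q 3 - sigma_nat 2 q\<bar> \<le> 7 * sigma_nat 0 q * sigma_nat 1 q"
proof -
  let ?t = "sigma_nat 0 q" and ?s = "sigma_nat 1 q"
  have "?t ^ 3 = ?t * ?t ^ 2" by (simp add: power3_eq_cube power2_eq_square)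
  also have "\<dots> \<le> ?t * (4 * ?s)"
    using sigma_nat_0_square_le[OF assms] real_le_sigma_nat_1[OF assms] sigma_nat_nonneg[of 0 q]
    by (intro mult_left_mono) simp_all
  finally have cube: "?t ^ 3 \<le> 4 * (?t * ?s)" by simp
  have nonneg: "0 \<le> ?t * ?s" "0 \<le> ?t ^ 3" by (simp_all add: sigma_nat_nonneg)
  have "stable_moment q 3 - sigma_nat 2 q = 3 * (?t * ?s) + ?t ^ 3"
    unfolding stable_moment_3 by (simp add: algebra_simps)
  hence "\<bar>stable_moment q 3 - sigma_nat 2 q\<bar> = 3 * (?t * ?s) + ?t ^ 3" using nonneg by simp
  also have "\<dots> \<le> 7 * (?t * ?s)" using cube by linarith
  finally show ?thesis by (simp add: mult.assoc)
qed

lemma two_pow_le_of_le_log: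
  assumes "0 < q" "real \<delta> \<le> ln (real q) / ln 2"
  shows "2 ^ \<delta> \<le> q"
proof -
  have "real \<delta> \<le> log 2 (real q)" using assms(2) by (simp add: log_def)
  hence "2 powr real \<delta> \<le> real q" using assms(1) by (simp add: le_log_iff)
  hence "real (2 ^ \<delta>) \<le> real q" by (simp add: powr_realpow)
  thus ?thesis by (simp only: of_nat_le_iff)
qed

theorem lemma5p1:
  "\<exists>(q0::nat) (C::real). C > 0 \<and>
     (\<forall>(q::nat) (\<delta>::nat) (n::nat).
        q \<ge> q0 \<longrightarrow> \<delta> \<ge> 1 \<longrightarrow> real \<delta> \<le> ln (real q) / ln 2 \<longrightarrow> n \<ge> \<delta> * q \<longrightarrow>
        (let A = fixmoment n q \<delta> in
          (\<delta> = 1 \<longrightarrow> A = sigma 0 q) \<and>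
          (\<delta> = 2 \<longrightarrow> A = sigma 1 q + (sigma 0 q)\<^sup>2) \<and>
          (\<delta> = 3 \<longrightarrow> \<bar>A - sigma 2 q\<bar> \<le> C * sigma 0 q * sigma 1 q) \<and>
          (\<delta> \<ge> 4 \<longrightarrow> \<bar>A - sigma (real \<delta> - 1) q\<bar> \<le>
              C * real q ^ (\<delta> - 2) * (real \<delta> * sigma 0 q + 2 ^ \<delta>))))"
proof (intro exI[of _ "65536::nat"] exI[of _ "100::real"] conjI allI impI)
  fix q \<delta> n :: nat
  assume q0: "65536 \<le> q" and \<delta>: "1 \<le> \<delta>" "real \<delta> \<le> ln (real q) / ln 2" and n: "\<delta> * q \<le> n"
  have q: "0 < q" using q0 by simp
  have two_pow: "2 ^ \<delta> \<le> q" by (rule two_pow_le_of_le_log[OF q \<delta>(2)])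
  have sigma_nat_012: "sigma 0 q = sigma_nat 0 q" "sigma 1 q = sigma_nat 1 q" "sigma 2 q = sigma_nat 2 q"
    using sigma_of_nat_eq_sigma_nat[of 0 q] sigma_of_nat_eq_sigma_nat[of 1 q]
      sigma_of_nat_eq_sigma_nat[of 2 q] by simp_all
  have sigma_pred: "sigma (real \<delta> - 1) q = sigma_nat (\<delta> - 1) q"
    using sigma_of_nat_eq_sigma_nat[of "\<delta> - 1" q] \<delta>(1) by (simp add: of_nat_diff)
  show "let A = fixmoment n q \<delta> in
          (\<delta> = 1 \<longrightarrow> A = sigma 0 q) \<and>
          (\<delta> = 2 \<longrightarrow> A = sigma 1 q + (sigma 0 q)\<^sup>2) \<and>
          (\<delta> = 3 \<longrightarrow> \<bar>A - sigma 2 q\<bar> \<le> 100 * sigma 0 q * sigma 1 q) \<and>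
          (\<delta> \<ge> 4 \<longrightarrow> \<bar>A - sigma (real \<delta> - 1) q\<bar> \<le>
              100 * real q ^ (\<delta> - 2) * (real \<delta> * sigma 0 q + 2 ^ \<delta>))"
    unfolding Let_def fixmoment_eq_stable_moment[OF q n] sigma_pred sigma_nat_012
  proof (intro conjI impI)
    show "\<delta> = 2 \<Longrightarrow> stable_moment q \<delta> = sigma_nat 1 q + (sigma_nat 0 q)\<^sup>2"
      using stable_moment_2 by simp
    have "7 * sigma_nat 0 q * sigma_nat 1 q \<le> 100 * sigma_nat 0 q * sigma_nat 1 q"
      using mult_nonneg_nonneg[OF sigma_nat_nonneg sigma_nat_nonneg, of 0 q 1 q] by simp
    thus "\<delta> = 3 \<Longrightarrow> \<bar>stable_moment q \<delta> - sigma_nat 2 q\<bar> \<le> 100 * sigma_nat 0 q * sigma_nat 1 q"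
      using stable_moment_3_excess_abs_le[OF q] by simp
    show "4 \<le> \<delta> \<Longrightarrow> \<bar>stable_moment q \<delta> - sigma_nat (\<delta> - 1) q\<bar>
        \<le> 100 * real q ^ (\<delta> - 2) * (real \<delta> * sigma_nat 0 q + 2 ^ \<delta>)"
      by (rule stable_moment_excess_abs_le[OF q0 _ two_pow])
  qed simp
qed simp

end
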